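(* Let $p\ge2$ be an integer and let $f\in\mathcal{R}$ be nonzero with $U_pf=\lambda_pf$ for some $\lambda_p\neq0$, and let $L$ be the level of $f$ (all poles of such $f$ are roots of unity). Then for every positive integer $m$, $f$ is an eigenfunction of $U_{p+mL}$, i.e. $U_{p+mL}f=\lambda_{p+mL}f$ for some real $\lambda_{p+mL}$. In addition, $f$ is an eigenfunction of $U_q$ for infinitely many primes $q$.
   Context: $\mathcal{R}$ denotes the real vector space of rational functions $f(x)=A(x)/B(x)$ with $A,B\in\mathbb{R}[x]$, $B(0)\neq 0$ and $\deg A<\deg B$. For $f\in\mathcal{R}$ with Taylor expansion $f(x)=\sum_{n\ge0}a_nx^n$ at $0$ and a positive integer $q$, $U_qf(x)=\sum_{n\ge 0}a_{qn}x^n$. If all poles of $f$ are roots of unity, the level of $f$ is the least common multiple of the orders of these roots of unity. *)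

theory Defs
  imports "HOL-Computational_Algebra.Computational_Algebra"
begin

text \<open>An element f of the space R is represented by its Taylor expansion at 0,
  a real formal power series.  rep A B f: f = A/B with B(0) nonzero, deg A < deg B.\<close>

definition rep :: "real poly \<Rightarrow> real poly \<Rightarrow> real fps \<Rightarrow> bool" where
  "rep A B f \<longleftrightarrow> poly B 0 \<noteq> 0 \<and> degree A < degree B \<and>
     f = fps_of_poly A / fps_of_poly B"

definition inR :: "real fps \<Rightarrow> bool" where
  "inR f \<longleftrightarrow> (\<exists>A B. rep A B f)"

definition U :: "nat \<Rightarrow> real fps \<Rightarrow> real fps" where
  "U q f = Abs_fps (\<lambda>n. f $ (q * n))"

text \<open>Complex poles of f: the zeros of the denominator of every (hence of the
  reduced) representation A/B.\<close>
definition poles :: "real fps \<Rightarrow> complex set" where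
  "poles f = {z. \<forall>A B. rep A B f \<longrightarrow> poly (map_poly complex_of_real B) z = 0}"

definition root_of_unity :: "complex \<Rightarrow> bool" where
  "root_of_unity z \<longleftrightarrow> (\<exists>n::nat. n > 0 \<and> z ^ n = 1)"

definition unity_order :: "complex \<Rightarrow> nat" where
  "unity_order z = (LEAST n::nat. n > 0 \<and> z ^ n = 1)"

definition level :: "real fps \<Rightarrow> nat" where
  "level f = Lcm (unity_order ` poles f)"

definition eigenfunction :: "nat \<Rightarrow> real fps \<Rightarrow> bool" where
  "eigenfunction q f \<longleftrightarrow> (\<exists>c::real. U q f = fps_const c * f)"

end

(* Let U_p f = lambda f with lambda nonzero, and write f = A/B in lowest terms.  If D is the
   polynomial whose roots are the p-th powers of the roots of B, then B divides a power of
   D(x^p); since U_p (D(x^p) g) = D U_p g, applying U_p to f shows that B divides a power of D.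
   So every root of B is the p-th power of a root of B, and a finite set of nonzero numbers
   closed under such p-th roots consists of roots of unity.  Hence B divides (x^L - 1)^N for the
   level L, and the coefficients of f form a quasi-polynomial, f_n = P_(n mod L)(n).  Comparing
   f_(pn) = lambda f_n, every monomial x^j occurring in some P_r satisfies |lambda| = p^j, so
   f_n = c(n mod L) n^d.  Then U_q f = (q/p)^d lambda f for q = p (mod L) and U_q f = q^d f for
   q = 1 (mod L), and there are infinitely many primes q = 1 (mod L): they are the prime
   divisors of the values at multiples of L of a polynomial vanishing at the primitive L-th
   roots of unity. *)
theory Submission
  imports Defs "HOL-Computational_Algebra.Field_as_Ring" "HOL-Number_Theory.Pocklington"
    "Jordan_Normal_Form.Char_Poly"
begin

hide_const (open) up_ring.coeff up_ring.monom module.smult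
no_notation vec_index (infixl "$" 100)

interpretation of_real_poly_hom: map_poly_inj_idom_hom "of_real :: real \<Rightarrow> complex" ..

section \<open>Decimation of formal power series\<close>

definition fps_decimate :: "nat \<Rightarrow> 'a::zero fps \<Rightarrow> 'a fps" where
  "fps_decimate q F = Abs_fps (\<lambda>n. F $ (q * n))"

lemma U_eq_fps_decimate: "U q f = fps_decimate q f"
  by (simp add: U_def fps_decimate_def)

lemma fps_decimate_add: "fps_decimate q (F + G) = fps_decimate q F + fps_decimate q G"
  by (simp add: fps_decimate_def fps_ext)

lemma fps_decimate_const_mult:
  "fps_decimate q (fps_const c * F) = fps_const (c::'a::comm_semiring_1) * fps_decimate q F"
  by (simp add: fps_decimate_def fps_ext)

lemma fps_decimate_X_power_mult:
  fixes F :: "'a::comm_semiring_1 fps"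
  assumes "q > 0"
  shows "fps_decimate q (fps_X ^ q * F) = fps_X * fps_decimate q F"
proof (rule fps_ext)
  fix n
  show "fps_decimate q (fps_X ^ q * F) $ n = (fps_X * fps_decimate q F) $ n"
    using assms by (cases n) (simp_all add: fps_decimate_def fps_X_power_mult_nth)
qed

lemma fps_decimate_pcompose_monom_mult:
  fixes F :: "'a::comm_ring_1 fps"
  assumes "q > 0"
  shows "fps_decimate q (fps_of_poly (pcompose D (monom 1 q)) * F) = fps_of_poly D * fps_decimate q F"
proof (induction D)
  case 0
  then show ?case by (simp add: fps_decimate_def fps_ext)
next
  case (pCons a D)
  have "fps_of_poly (pcompose (pCons a D) (monom 1 q)) * F
      = fps_const a * F + fps_X ^ q * (fps_of_poly (pcompose D (monom 1 q)) * F)"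
    by (simp add: fps_of_poly_add fps_of_poly_mult fps_of_poly_const
        fps_of_poly_monom' distrib_right mult.assoc)
  then have "fps_decimate q (fps_of_poly (pcompose (pCons a D) (monom 1 q)) * F)
      = fps_const a * fps_decimate q F + fps_X * (fps_of_poly D * fps_decimate q F)"
    using pCons.IH assms by (simp add: fps_decimate_add fps_decimate_const_mult fps_decimate_X_power_mult)
  also have "\<dots> = fps_of_poly (pCons a D) * fps_decimate q F"
    by (simp add: fps_of_poly_pCons algebra_simps)
  finally show ?case .
qed

lemma fps_decimate_fps_of_poly:
  assumes "q > 0"
  shows "\<exists>E. fps_decimate q (fps_of_poly P) = fps_of_poly E"
proof
  show "fps_decimate q (fps_of_poly P)
      = fps_of_poly (truncate_fps (Suc (degree P)) (fps_decimate q (fps_of_poly P)))"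
  proof (rule fps_ext)
    fix n
    have "n \<le> q * n"
      using mult_le_mono1[of 1 q n] assms by simp
    then have "degree P < q * n" if "\<not> n < Suc (degree P)"
      using that by linarith
    then show "fps_decimate q (fps_of_poly P) $ n
        = fps_of_poly (truncate_fps (Suc (degree P)) (fps_decimate q (fps_of_poly P))) $ n"
      by (auto simp: fps_decimate_def coeff_eq_0)
  qed
qed

lemma fps_decimate_eigen_denominator_dvd:
  fixes F :: "'a::comm_ring_1 fps"
  assumes F: "F * fps_of_poly B = fps_of_poly A"
    and eigen: "fps_decimate q F = fps_const c * F"
    and dvd: "B dvd pcompose D (monom 1 q)" and q: "q > 0"
  shows "B dvd smult c (D * A)"
proof -
  obtain C where C: "pcompose D (monom 1 q) = B * C"
    using dvd by (elim dvdE)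
  obtain E where E: "fps_decimate q (fps_of_poly (A * C)) = fps_of_poly E"
    using fps_decimate_fps_of_poly[OF q] by blast
  have "fps_of_poly (pcompose D (monom 1 q)) * F = fps_of_poly (A * C)"
    by (simp add: C fps_of_poly_mult F[symmetric] ac_simps)
  then have DE: "fps_of_poly D * (fps_const c * F) = fps_of_poly E"
    using fps_decimate_pcompose_monom_mult[OF q, of D F] E eigen by simp
  have "fps_of_poly (smult c (D * A)) = fps_of_poly D * (fps_const c * F) * fps_of_poly B"
    by (simp add: fps_of_poly_smult fps_of_poly_mult F[symmetric] ac_simps)
  also have "\<dots> = fps_of_poly B * (fps_of_poly D * (fps_const c * F))"
    by (simp add: ac_simps)
  also have "\<dots> = fps_of_poly (B * E)"
    by (simp add: DE fps_of_poly_mult)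
  finally show ?thesis
    by (simp only: fps_of_poly_eq_iff) simp
qed

definition complex_fps :: "real fps \<Rightarrow> complex fps" where
  "complex_fps f = Abs_fps (\<lambda>n. of_real (f $ n))"

lemma complex_fps_mult: "complex_fps (f * g) = complex_fps f * complex_fps g"
  by (rule fps_ext) (simp add: complex_fps_def fps_mult_nth)

lemma complex_fps_of_poly: "complex_fps (fps_of_poly P) = fps_of_poly (map_poly of_real P)"
  by (rule fps_ext) (simp add: complex_fps_def coeff_map_poly)

lemma complex_fps_const_mult: "complex_fps (fps_const c * f) = fps_const (of_real c) * complex_fps f"
  by (rule fps_ext) (simp add: complex_fps_def)

lemma fps_decimate_complex_fps: "fps_decimate q (complex_fps f) = complex_fps (fps_decimate q f)"
  by (rule fps_ext) (simp add: complex_fps_def fps_decimate_def)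

section \<open>Reduced representations and poles\<close>

lemma rep_iff_mult:
  "rep A B f \<longleftrightarrow> poly B 0 \<noteq> 0 \<and> degree A < degree B \<and> f * fps_of_poly B = fps_of_poly A"
proof (cases "poly B 0 = 0")
  case False
  then have B0: "fps_of_poly B $ 0 \<noteq> 0"
    by (simp add: poly_0_coeff_0)
  have "f = fps_of_poly A / fps_of_poly B \<longleftrightarrow> f * fps_of_poly B = fps_of_poly A"
  proof
    assume "f = fps_of_poly A / fps_of_poly B"
    then show "f * fps_of_poly B = fps_of_poly A"
      using B0 by (simp add: fps_divide_unit inverse_mult_eq_1 mult.assoc)
  next
    assume "f * fps_of_poly B = fps_of_poly A"
    then show "f = fps_of_poly A / fps_of_poly B"
      using B0 by (metis fps_divide_times_eq fps_nonzero_nth)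
  qed
  then show ?thesis
    unfolding rep_def by auto
qed (auto simp: rep_def)

lemma rep_coprime_exists:
  assumes "rep A B f" and "f \<noteq> 0"
  shows "\<exists>A' B'. rep A' B' f \<and> coprime A' B'"
proof -
  have B: "poly B 0 \<noteq> 0" "degree A < degree B" "f * fps_of_poly B = fps_of_poly A"
    using assms(1) by (auto simp: rep_iff_mult)
  have "B \<noteq> 0"
    using B(1) by auto
  moreover have "A \<noteq> 0"
    using B(3) assms(2) \<open>B \<noteq> 0\<close> by auto
  define g where "g = gcd A B"
  define A' where "A' = A div g"
  define B' where "B' = B div g"
  have g: "g \<noteq> 0" "A = A' * g" "B = B' * g"
    using \<open>B \<noteq> 0\<close> by (simp_all add: g_def A'_def B'_def)
  have "A' \<noteq> 0" "B' \<noteq> 0"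
    using g \<open>A \<noteq> 0\<close> \<open>B \<noteq> 0\<close> by auto
  have "coprime A' B'"
    unfolding A'_def B'_def g_def using \<open>B \<noteq> 0\<close> by (intro div_gcd_coprime) simp
  moreover have "poly B' 0 \<noteq> 0"
    using B(1) g(3) by auto
  moreover have "degree A' < degree B'"
    using B(2) g \<open>A' \<noteq> 0\<close> \<open>B' \<noteq> 0\<close> by (simp add: degree_mult_eq)
  moreover have "f * fps_of_poly B' = fps_of_poly A'"
  proof -
    have "f * fps_of_poly B' * fps_of_poly g = fps_of_poly A' * fps_of_poly g"
      using B(3) g by (simp add: fps_of_poly_mult mult.assoc)
    then show ?thesis
      using g(1) by simp
  qed
  ultimately show ?thesis
    by (auto simp: rep_iff_mult)
qed

lemma rep_coprime_denominator_dvd: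
  assumes "rep A B f" and "coprime A B" and "rep A' B' f"
  shows "B dvd B'"
proof -
  have f: "f * fps_of_poly B = fps_of_poly A" "f * fps_of_poly B' = fps_of_poly A'"
    using assms(1,3) by (auto simp: rep_iff_mult)
  have "fps_of_poly (A * B') = fps_of_poly (A' * B)"
    by (simp add: fps_of_poly_mult f[symmetric] ac_simps)
  then have "A * B' = A' * B"
    by (simp only: fps_of_poly_eq_iff)
  then have "B dvd A * B'"
    by simp
  then show ?thesis
    using assms(2) by (simp add: coprime_commute coprime_dvd_mult_right_iff)
qed

lemma poles_eq_roots_coprime_denominator:
  assumes "rep A B f" and "coprime A B"
  shows "poles f = {z. poly (map_poly of_real B) z = 0}"
proof
  show "poles f \<subseteq> {z. poly (map_poly of_real B) z = 0}"
    using assms(1) unfolding poles_def by blast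
  show "{z. poly (map_poly of_real B) z = 0} \<subseteq> poles f"
  proof (clarsimp simp: poles_def)
    fix z A' B'
    assume "poly (map_poly complex_of_real B) z = 0" and "rep A' B' f"
    moreover obtain C where "B' = B * C"
      using rep_coprime_denominator_dvd[OF assms \<open>rep A' B' f\<close>] by (elim dvdE)
    ultimately show "poly (map_poly complex_of_real B') z = 0"
      by (simp add: of_real_poly_hom.hom_mult)
  qed
qed

lemma coprime_imp_no_common_complex_root:
  fixes A B :: "real poly" and z :: complex
  assumes "coprime A B"
    and "poly (map_poly of_real A) z = 0" and "poly (map_poly of_real B) z = 0"
  shows False
proof -
  obtain u v where "u * A + v * B = 1"
    using bezout_coefficients_fst_snd[of A B] assms(1) unfolding coprime_iff_gcd_eq_1 by metis
  then have "poly (map_poly (of_real :: real \<Rightarrow> complex) (u * A + v * B)) z = 1"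
    by simp
  with assms(2,3) show False
    by (simp add: of_real_poly_hom.hom_add of_real_poly_hom.hom_mult)
qed

lemma dvd_pcompose_power_roots_prod:
  fixes B :: "complex poly"
  assumes "B \<noteq> 0"
  shows "B dvd pcompose ((\<Prod>w | poly B w = 0. [:- (w ^ p), 1:]) ^ degree B) (monom 1 p)"
proof -
  define S where "S = {w. poly B w = 0}"
  have "finite S"
    unfolding S_def using assms by (rule poly_roots_finite)
  have "poly (pcompose (\<Prod>w\<in>S. [:- (w ^ p), 1:]) (monom 1 p)) z = 0" if "poly B z = 0" for z
  proof -
    have "poly (pcompose (\<Prod>w\<in>S. [:- (w ^ p), 1:]) (monom 1 p)) z = (\<Prod>w\<in>S. z ^ p - w ^ p)"
      by (simp add: poly_pcompose poly_monom poly_prod)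
    also have "\<dots> = 0"
      using \<open>finite S\<close> that by (intro prod_zero) (auto simp: S_def)
    finally show ?thesis .
  qed
  then have "B dvd pcompose (\<Prod>w\<in>S. [:- (w ^ p), 1:]) (monom 1 p) ^ degree B"
    using nullstellensatz_univariate[of B "pcompose (\<Prod>w\<in>S. [:- (w ^ p), 1:]) (monom 1 p)"] assms
    by blast
  then show ?thesis
    by (simp add: S_def pcompose_hom.hom_power)
qed

lemma pole_is_power_of_pole:
  fixes f :: "real fps" and z :: complex
  assumes rep: "rep A B f" and cop: "coprime A B"
    and eigen: "U p f = fps_const lp * f" and "lp \<noteq> 0" and "p > 0"
    and z: "poly (map_poly of_real B) z = 0"
  shows "\<exists>w. poly (map_poly of_real B) w = 0 \<and> z = w ^ p"
proof -
  define Bc :: "complex poly" where "Bc = map_poly of_real B"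
  define Ac :: "complex poly" where "Ac = map_poly of_real A"
  define D where "D = (\<Prod>w | poly Bc w = 0. [:- (w ^ p), 1:])"
  have "poly B 0 \<noteq> 0" and f: "f * fps_of_poly B = fps_of_poly A"
    using rep by (auto simp: rep_iff_mult)
  then have "Bc \<noteq> 0"
    by (auto simp: Bc_def)
  then have "finite {w. poly Bc w = 0}"
    by (rule poly_roots_finite)
  have "complex_fps f * fps_of_poly Bc = fps_of_poly Ac"
    using arg_cong[OF f, of complex_fps] by (simp add: complex_fps_mult complex_fps_of_poly Ac_def Bc_def)
  moreover have "fps_decimate p (complex_fps f) = fps_const (of_real lp) * complex_fps f"
    using eigen by (simp add: fps_decimate_complex_fps U_eq_fps_decimate[symmetric] complex_fps_const_mult)
  ultimately have "Bc dvd smult (of_real lp) (D ^ degree Bc * Ac)"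
    using fps_decimate_eigen_denominator_dvd dvd_pcompose_power_roots_prod[OF \<open>Bc \<noteq> 0\<close>] \<open>p > 0\<close>
    unfolding D_def by blast
  then obtain C where C: "smult (of_real lp) (D ^ degree Bc * Ac) = Bc * C"
    by (elim dvdE)
  have "poly Bc z = 0"
    using z by (simp add: Bc_def)
  then have "of_real lp * (poly D z ^ degree Bc * poly Ac z) = 0"
    using arg_cong[OF C, of "\<lambda>P. poly P z"] by simp
  moreover have "poly Ac z \<noteq> 0"
    using coprime_imp_no_common_complex_root[OF cop _ z] by (auto simp: Ac_def)
  ultimately have "(\<Prod>w | poly Bc w = 0. z - w ^ p) = 0"
    using \<open>lp \<noteq> 0\<close> by (simp add: D_def poly_prod)
  then obtain w where "poly Bc w = 0" and "z = w ^ p"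
    using \<open>finite {w. poly Bc w = 0}\<close> by auto
  then show ?thesis
    by (auto simp: Bc_def)
qed

lemma finite_range_imp_repeat:
  fixes w :: "nat \<Rightarrow> 'a"
  assumes "finite (range w)"
  obtains a b where "a < b" and "w a = w b"
proof -
  have "\<not> inj w"
    using assms finite_imageD infinite_UNIV_nat by blast
  then obtain i j where "w i = w j" and "i \<noteq> j"
    unfolding inj_def by blast
  then show ?thesis
    using that by (metis linorder_neqE_nat)
qed

lemma power_diff_eq_1_if_power_eq:
  fixes x :: "'a::idom"
  assumes "x ^ a = x ^ b" and "a < b" and "x \<noteq> 0"
  shows "x ^ (b - a) = 1"
proof -
  have "x ^ a * x ^ (b - a) = x ^ b"
    using assms(2) by (simp add: power_add[symmetric])
  then have "x ^ a * x ^ (b - a) = x ^ a * 1"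
    using assms(1) by simp
  then show ?thesis
    using assms(3) by simp
qed

lemma power_closed_finite_set_roots_of_unity:
  fixes z :: "'a::idom"
  assumes "finite S" and "0 \<notin> S" and closed: "S \<subseteq> (\<lambda>w. w ^ p) ` S"
    and "p \<ge> 2" and "z \<in> S"
  shows "\<exists>m>0. z ^ m = 1"
proof -
  have "inj_on (\<lambda>w. w ^ p) S"
    using finite_surj_inj[OF assms(1) closed] .
  then have "(\<lambda>w. w ^ p) ` S = S"
    using closed \<open>finite S\<close> by (metis card_image card_subset_eq finite_imageI)
  have pow: "z ^ (p ^ n) \<in> S" for n
  proof (induction n)
    case (Suc n)
    have "z ^ (p ^ Suc n) = (z ^ (p ^ n)) ^ p"
      by (simp add: power_mult[symmetric] mult.commute)
    then show ?case
      using Suc \<open>(\<lambda>w. w ^ p) ` S = S\<close> by blast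
  qed (simp add: \<open>z \<in> S\<close>)
  then have "finite (range (\<lambda>n. z ^ (p ^ n)))"
    using \<open>finite S\<close> by (meson finite_subset image_subsetI)
  then obtain a b where "a < b" and ab: "z ^ (p ^ a) = z ^ (p ^ b)"
    by (rule finite_range_imp_repeat)
  then have "p ^ a < p ^ b"
    using \<open>p \<ge> 2\<close> by (simp add: power_strict_increasing)
  moreover have "z \<noteq> 0"
    using \<open>0 \<notin> S\<close> \<open>z \<in> S\<close> by auto
  ultimately have "z ^ (p ^ b - p ^ a) = 1"
    using ab power_diff_eq_1_if_power_eq by blast
  then show ?thesis
    using \<open>p ^ a < p ^ b\<close> by (intro exI[of _ "p ^ b - p ^ a"]) simp
qed

lemma poles_roots_of_unity:
  assumes "p \<ge> 2" and "rep A B f" and "coprime A B"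
    and "U p f = fps_const lp * f" and "lp \<noteq> 0"
  shows "\<forall>z\<in>poles f. root_of_unity z"
proof
  fix z assume "z \<in> poles f"
  define S where "S = {w. poly (map_poly (of_real :: real \<Rightarrow> complex) B) w = 0}"
  have "poly B 0 \<noteq> 0"
    using assms(2) by (simp add: rep_iff_mult)
  then have "map_poly (of_real :: real \<Rightarrow> complex) B \<noteq> 0" and "0 \<notin> S"
    by (auto simp: S_def)
  from this(1) have "finite S"
    unfolding S_def by (rule poly_roots_finite)
  have closed: "S \<subseteq> (\<lambda>w. w ^ p) ` S"
  proof
    fix y assume "y \<in> S"
    then have "poly (map_poly of_real B) y = 0"
      by (simp add: S_def)
    moreover have "p > 0"
      using assms(1) by simp
    ultimately obtain w where "poly (map_poly of_real B) w = 0" and "y = w ^ p"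
      using pole_is_power_of_pole[OF assms(2-5)] by blast
    then show "y \<in> (\<lambda>w. w ^ p) ` S"
      by (simp add: S_def)
  qed
  have "z \<in> S"
    using \<open>z \<in> poles f\<close> poles_eq_roots_coprime_denominator[OF assms(2,3)] by (simp add: S_def)
  show "root_of_unity z"
    unfolding root_of_unity_def
    by (rule power_closed_finite_set_roots_of_unity[OF \<open>finite S\<close> \<open>0 \<notin> S\<close> closed assms(1) \<open>z \<in> S\<close>])
qed

lemma root_of_unity_unity_order:
  assumes "root_of_unity z"
  shows "unity_order z > 0" and "z ^ unity_order z = 1"
proof -
  obtain n where "n > 0 \<and> z ^ n = 1"
    using assms unfolding root_of_unity_def by blast
  then have "unity_order z > 0 \<and> z ^ unity_order z = 1"
    unfolding unity_order_def by (rule LeastI)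
  then show "unity_order z > 0" and "z ^ unity_order z = 1"
    by auto
qed

lemma level_pos:
  assumes "finite (poles f)" and "\<forall>z\<in>poles f. root_of_unity z"
  shows "level f > 0"
proof -
  have "0 \<notin> unity_order ` poles f"
    using assms(2) root_of_unity_unity_order(1) by fastforce
  then have "Lcm (unity_order ` poles f) \<noteq> 0"
    using assms(1) Lcm_0_iff by blast
  then show ?thesis
    by (simp add: level_def)
qed

lemma pole_power_level:
  assumes "z \<in> poles f" and "root_of_unity z"
  shows "z ^ level f = 1"
proof -
  obtain k where "level f = unity_order z * k"
    using assms(1) unfolding level_def by (metis dvd_Lcm dvdE image_eqI)
  then show ?thesis
    using root_of_unity_unity_order(2)[OF assms(2)] by (simp add: power_mult)
qed

section \<open>Quasi-polynomial coefficients\<close>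

lemma poly_pochhammer_X: "poly (pochhammer [:0, 1:] j) x = pochhammer (x::'a::comm_ring_1) j"
  by (induction j) (simp_all add: pochhammer_Suc of_nat_poly algebra_simps)

lemma pochhammer_backward_difference:
  "pochhammer (x::'a::comm_ring_1) (Suc j) - pochhammer (x - 1) (Suc j) = of_nat (Suc j) * pochhammer x j"
proof -
  have "pochhammer (x - 1) (Suc j) = (x - 1) * pochhammer x j"
    by (simp add: pochhammer_rec)
  then show ?thesis
    by (simp add: pochhammer_Suc algebra_simps)
qed

lemma monic_pochhammer_X:
  "degree (pochhammer [:0, 1:] j :: 'a::idom poly) = j \<and> lead_coeff (pochhammer [:0, 1:] j :: 'a poly) = 1"
proof (induction j)
  case (Suc j)
  have e: "pochhammer [:0, 1:] (Suc j) = pochhammer [:0, 1::'a:] j * [:of_nat j, 1:]"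
    by (simp add: pochhammer_Suc of_nat_poly)
  have "pochhammer [:0, 1::'a:] j \<noteq> 0"
    using Suc by auto
  then have "degree (pochhammer [:0, 1::'a:] j * [:of_nat j, 1:]) = Suc j"
    using conjunct1[OF Suc] by (subst degree_mult_eq) simp_all
  moreover have "lead_coeff (pochhammer [:0, 1::'a:] j * [:of_nat j, 1:]) = 1"
    by (simp only: lead_coeff_mult conjunct2[OF Suc]) simp
  ultimately show ?case
    unfolding e by blast
qed simp

lemma polynomial_antidifference:
  "\<exists>R. \<forall>x. poly R x - poly R (x - 1) = poly Q (x::'a::field_char_0)"
proof (induction "degree Q" arbitrary: Q rule: less_induct)
  case less
  define d where "d = degree Q"
  define c where "c = lead_coeff Q"
  define R0 where "R0 = smult (c / of_nat (Suc d)) (pochhammer [:0, 1:] (Suc d))"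
  define Q' where "Q' = Q - smult c (pochhammer [:0, 1:] d)"
  have R0: "poly R0 x - poly R0 (x - 1) = c * pochhammer x d" for x
  proof -
    have "poly R0 x - poly R0 (x - 1)
        = c / of_nat (Suc d) * (pochhammer x (Suc d) - pochhammer (x - 1) (Suc d))"
      by (simp add: R0_def poly_pochhammer_X algebra_simps)
    then show ?thesis
      by (simp add: pochhammer_backward_difference del: of_nat_Suc)
  qed
  have "degree (pochhammer [:0, 1::'a:] d) = d" and "lead_coeff (pochhammer [:0, 1::'a:] d) = 1"
    using monic_pochhammer_X[of d] by auto
  then have "degree Q' \<le> d" and "coeff Q' d = 0"
    unfolding Q'_def using degree_smult_le[of c "pochhammer [:0, 1::'a:] d"]
    by (auto simp: c_def d_def intro!: degree_diff_le)
  have "\<exists>R'. \<forall>x. poly R' x - poly R' (x - 1) = poly Q' x"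
  proof (cases "Q' = 0")
    case False
    have "degree Q' \<noteq> d"
    proof
      assume "degree Q' = d"
      then have "lead_coeff Q' = 0"
        using \<open>coeff Q' d = 0\<close> by simp
      then show False
        using False by simp
    qed
    then have "degree Q' < degree Q"
      using \<open>degree Q' \<le> d\<close> by (simp add: d_def)
    then show ?thesis
      by (rule less)
  qed (intro exI[of _ 0], simp)
  then obtain R' where R': "\<forall>x. poly R' x - poly R' (x - 1) = poly Q' x"
    by blast
  have "poly (R0 + R') x - poly (R0 + R') (x - 1) = poly Q x" for x
    using R0[of x] R'[rule_format, of x] by (simp add: Q'_def poly_pochhammer_X algebra_simps)
  then show ?case
    by blast
qed

lemma polynomial_if_backward_differences_polynomial:
  fixes a :: "nat \<Rightarrow> 'a::field_char_0"
  assumes "\<forall>k>m. a k - a (k - 1) = poly Q (of_nat k)"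
  shows "\<exists>Q'. \<forall>k\<ge>m. a k = poly Q' (of_nat k)"
proof -
  obtain R where R: "\<forall>x. poly R x - poly R (x - 1) = poly Q x"
    using polynomial_antidifference by blast
  define Q' where "Q' = [:a m - poly R (of_nat m):] + R"
  have "a k = poly Q' (of_nat k)" if "k \<ge> m" for k
    using that
  proof (induction k rule: dec_induct)
    case (step k)
    have "a (Suc k) = a k + poly Q (of_nat (Suc k))"
      using assms[rule_format, of "Suc k"] step.hyps by (simp add: diff_eq_eq add.commute)
    also have "\<dots> = poly Q' (of_nat (Suc k))"
      using step.IH R[rule_format, of "of_nat (Suc k)"] by (simp add: Q'_def algebra_simps)
    finally show ?case .
  qed (simp add: Q'_def)
  then show ?thesis
    by blast
qed

lemma fps_mult_X_power_minus_one_nth: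
  "(h * (fps_X ^ L - 1)) $ n = (if n < L then 0 else h $ (n - L)) - (h $ n :: 'a::comm_ring_1)"
proof -
  have "(h * (fps_X ^ L - 1)) $ n = (fps_X ^ L * h) $ n - h $ n"
    by (simp only: right_diff_distrib mult_1_right mult.commute[of h "fps_X ^ L"] fps_sub_nth)
  then show ?thesis
    by (simp only: fps_X_power_mult_nth)
qed

lemma residue_class_polynomial_step:
  fixes h :: "'a::field_char_0 fps"
  assumes "\<forall>k>m. (h * (fps_X ^ L - 1)) $ (r + L * k) = poly Q (of_nat k)"
  shows "\<exists>Q'. \<forall>k\<ge>m. h $ (r + L * k) = poly Q' (of_nat k)"
proof (rule polynomial_if_backward_differences_polynomial[where a = "\<lambda>k. h $ (r + L * k)"])
  show "\<forall>k>m. h $ (r + L * k) - h $ (r + L * (k - 1)) = poly (- Q) (of_nat k)"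
  proof (intro allI impI)
    fix k assume "k > m"
    then obtain j where k: "k = Suc j"
      by (cases k) auto
    have "(h * (fps_X ^ L - 1)) $ (r + L * k) = h $ (r + L * (k - 1)) - h $ (r + L * k)"
      using fps_mult_X_power_minus_one_nth[of h L "r + L * k"] by (simp add: k)
    moreover have "(h * (fps_X ^ L - 1)) $ (r + L * k) = poly Q (of_nat k)"
      using assms(1) \<open>k > m\<close> by blast
    ultimately show "h $ (r + L * k) - h $ (r + L * (k - 1)) = poly (- Q) (of_nat k)"
      by simp
  qed
qed

lemma residue_class_polynomial:
  fixes h :: "'a::field_char_0 fps"
  assumes "\<forall>k\<ge>m + N. (h * (fps_X ^ L - 1) ^ N) $ (r + L * k) = poly Q (of_nat k)"
  shows "\<exists>Q'. \<forall>k\<ge>m. h $ (r + L * k) = poly Q' (of_nat k)"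
  using assms
proof (induction N arbitrary: h m Q)
  case 0
  then show ?case
    by auto
next
  case (Suc N)
  have "\<forall>k\<ge>Suc m + N. (h * (fps_X ^ L - 1) * (fps_X ^ L - 1) ^ N) $ (r + L * k) = poly Q (of_nat k)"
    using Suc.prems by (simp add: mult.assoc)
  then obtain Q' where "\<forall>k\<ge>Suc m. (h * (fps_X ^ L - 1)) $ (r + L * k) = poly Q' (of_nat k)"
    using Suc.IH[where h = "h * (fps_X ^ L - 1)" and m = "Suc m"] by blast
  then have "\<forall>k>m. (h * (fps_X ^ L - 1)) $ (r + L * k) = poly Q' (of_nat k)"
    by (simp add: Suc_le_eq)
  then show ?case
    by (rule residue_class_polynomial_step)
qed

lemma fps_coeffs_quasi_polynomial:
  fixes F :: "'a::field_char_0 fps"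
  assumes F: "F * (fps_X ^ L - 1) ^ N = fps_of_poly G" and "degree G < N * L" and "L > 0"
  shows "\<exists>P. \<forall>n. F $ n = poly (P (n mod L)) (of_nat n)"
proof -
  have "\<forall>r. \<exists>Q. \<forall>k. F $ (r + L * k) = poly Q (of_nat k)"
  proof
    fix r
    have "(F * (fps_X ^ L - 1) ^ N) $ (r + L * k) = 0" if "N \<le> k" for k
    proof -
      have "L * N \<le> L * k"
        using that by (rule mult_le_mono2)
      then have "N * L \<le> r + L * k"
        using mult.commute[of N L] by linarith
      then show ?thesis
        using \<open>degree G < N * L\<close> by (simp add: F coeff_eq_0)
    qed
    then show "\<exists>Q. \<forall>k. F $ (r + L * k) = poly Q (of_nat k)"
      using residue_class_polynomial[where h = F and m = 0 and N = N and L = L and r = r and Q = 0]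
      by simp
  qed
  from choice[OF this] obtain Q where Q: "\<And>r k. F $ (r + L * k) = poly (Q r) (of_nat k)"
    by blast
  define P where "P r = pcompose (Q r) [:- of_nat r / of_nat L, 1 / of_nat L:]" for r
  have "F $ (r + L * k) = poly (P r) (of_nat (r + L * k))" for r k
  proof -
    have "poly [:- of_nat r / of_nat L, 1 / of_nat L:] (of_nat (r + L * k)) = (of_nat k :: 'a)"
      using \<open>L > 0\<close> by (simp add: field_simps)
    then show ?thesis
      using Q[of r k] by (simp add: P_def poly_pcompose)
  qed
  then have "F $ n = poly (P (n mod L)) (of_nat n)" for n
    using mod_mult_div_eq[of n L] by metis
  then show ?thesis
    by blast
qed

lemma degree_monom_one_minus_one:
  assumes "L > 0"
  shows "degree (monom 1 L - 1 :: 'a::comm_ring_1 poly) = L"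
proof (rule antisym)
  show "degree (monom 1 L - 1 :: 'a poly) \<le> L"
    by (rule degree_diff_le) (simp_all add: degree_monom_le)
  show "L \<le> degree (monom 1 L - 1 :: 'a poly)"
    using assms by (intro le_degree) simp
qed

lemma real_poly_dvd_unity_power:
  fixes B :: "real poly"
  assumes "B \<noteq> 0" and roots: "\<forall>z. poly (map_poly of_real B) z = 0 \<longrightarrow> z ^ L = (1::complex)"
  shows "B dvd (monom 1 L - 1) ^ degree B"
proof -
  have "poly (map_poly of_real (monom 1 L - 1)) z = 0" if "poly (map_poly of_real B) z = 0"
    for z :: complex
    using roots that by (simp add: of_real_poly_hom.hom_minus map_poly_monom poly_monom)
  then have "map_poly of_real B dvd map_poly (of_real :: real \<Rightarrow> complex) (monom 1 L - 1) ^ degree B"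
    using nullstellensatz_univariate[of "map_poly of_real B" "map_poly of_real (monom 1 L - 1)"]
      \<open>B \<noteq> 0\<close> by simp
  then have "map_poly (of_real :: real \<Rightarrow> complex) B dvd map_poly of_real ((monom 1 L - 1) ^ degree B)"
    by (simp add: of_real_poly_hom.hom_power)
  then show ?thesis
    by (rule of_real_hom.dvd_map_poly_hom_imp_dvd)
qed

lemma rep_coeffs_quasi_polynomial:
  fixes f :: "real fps"
  assumes rep: "rep A B f" and "L > 0"
    and roots: "\<forall>z. poly (map_poly of_real B) z = 0 \<longrightarrow> z ^ L = (1::complex)"
  shows "\<exists>P. \<forall>n. f $ n = poly (P (n mod L)) (real n)"
proof -
  define N where "N = degree B"
  define X :: "real poly" where "X = monom 1 L - 1"
  have f: "poly B 0 \<noteq> 0" "degree A < degree B" "f * fps_of_poly B = fps_of_poly A"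
    using rep by (auto simp: rep_iff_mult)
  then have "B \<noteq> 0"
    by auto
  then have "B dvd X ^ N"
    using real_poly_dvd_unity_power[OF _ roots] unfolding X_def N_def by blast
  then obtain C where C: "X ^ N = B * C"
    by (elim dvdE)
  have "degree X = L"
    using degree_monom_one_minus_one[OF \<open>L > 0\<close>] by (simp add: X_def)
  then have "X \<noteq> 0"
    using \<open>L > 0\<close> by auto
  then have "C \<noteq> 0"
    using C by (metis mult_zero_right power_not_zero)
  have "degree B + degree C = degree (X ^ N)"
    using C \<open>B \<noteq> 0\<close> \<open>C \<noteq> 0\<close> by (simp add: degree_mult_eq)
  also have "\<dots> = N * L"
    using \<open>X \<noteq> 0\<close> \<open>degree X = L\<close> by (simp add: degree_power_eq)
  finally have "degree (A * C) < N * L"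
    using f(2) degree_mult_le[of A C] by linarith
  moreover have "f * (fps_X ^ L - 1) ^ N = fps_of_poly (A * C)"
  proof -
    have "fps_of_poly X = fps_X ^ L - 1"
      by (simp add: X_def fps_of_poly_diff fps_of_poly_monom')
    then have "f * (fps_X ^ L - 1) ^ N = f * fps_of_poly (X ^ N)"
      by (simp only: fps_of_poly_power)
    also have "\<dots> = f * fps_of_poly B * fps_of_poly C"
      by (simp only: C fps_of_poly_mult mult.assoc)
    finally show ?thesis
      by (simp add: f(3) fps_of_poly_mult)
  qed
  ultimately show ?thesis
    using fps_coeffs_quasi_polynomial[of f L N "A * C"] \<open>L > 0\<close> by blast
qed

section \<open>Eigenfunctions have monomial coefficients\<close>

lemma poly_eqI_infinite:
  fixes p q :: "'a::idom poly"
  assumes "infinite S" and "\<And>x. x \<in> S \<Longrightarrow> poly p x = poly q x"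
  shows "p = q"
proof (rule ccontr)
  assume "p \<noteq> q"
  then have "finite {x. poly (p - q) x = 0}"
    by (intro poly_roots_finite) simp
  moreover have "S \<subseteq> {x. poly (p - q) x = 0}"
    using assms(2) by auto
  ultimately show False
    using assms(1) finite_subset by blast
qed

lemma eigen_coeff_mult: "U p f = fps_const lp * f \<Longrightarrow> f $ (p * n) = lp * f $ n"
  by (drule arg_cong[where f = "\<lambda>F. F $ n"]) (simp add: U_def)

lemma quasi_polynomial_eigen_components:
  fixes f :: "real fps"
  assumes quasi: "\<forall>n. f $ n = poly (P (n mod L)) (real n)"
    and eigen: "U p f = fps_const lp * f" and "r < L"
  shows "pcompose (P (p * r mod L)) [:0, real p:] = smult lp (P r)"
proof (rule poly_eqI_infinite)
  show "infinite (range (\<lambda>k. real (r + L * k)))"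
    using \<open>r < L\<close> by (intro range_inj_infinite) (simp add: inj_def)
  fix x assume "x \<in> range (\<lambda>k. real (r + L * k))"
  then obtain k where x: "x = real (r + L * k)"
    by blast
  have "p * (r + L * k) = p * r + L * (p * k)"
    by (simp add: algebra_simps)
  then have "p * (r + L * k) mod L = p * r mod L"
    by simp
  have "poly (pcompose (P (p * r mod L)) [:0, real p:]) x = poly (P (p * r mod L)) (real (p * (r + L * k)))"
    by (simp add: x poly_pcompose algebra_simps)
  also have "\<dots> = f $ (p * (r + L * k))"
    using quasi \<open>p * (r + L * k) mod L = p * r mod L\<close> by simp
  also have "\<dots> = lp * f $ (r + L * k)"
    by (rule eigen_coeff_mult[OF eigen])
  also have "\<dots> = poly (smult lp (P r)) x"
    using quasi \<open>r < L\<close> by (simp add: x)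
  finally show "poly (pcompose (P (p * r mod L)) [:0, real p:]) x = poly (smult lp (P r)) x" .
qed

lemma scaled_orbit_root_of_unity:
  fixes c :: "nat \<Rightarrow> 'a::idom"
  assumes "\<And>s. s < L \<Longrightarrow> \<sigma> s < L" and "\<And>s. s < L \<Longrightarrow> c (\<sigma> s) = \<mu> * c s"
    and "r < L" and "c r \<noteq> 0" and "\<mu> \<noteq> 0"
  shows "\<exists>k>0. \<mu> ^ k = 1"
proof -
  have iter: "(\<sigma> ^^ m) r < L \<and> c ((\<sigma> ^^ m) r) = \<mu> ^ m * c r" for m
  proof (induction m)
    case (Suc m)
    have "c (\<sigma> ((\<sigma> ^^ m) r)) = \<mu> * c ((\<sigma> ^^ m) r)"
      using assms(2) Suc by blast
    then show ?case
      using Suc assms(1) by simp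
  qed (simp add: assms(3))
  then have "range (\<lambda>m. (\<sigma> ^^ m) r) \<subseteq> {..<L}"
    by auto
  then have "finite (range (\<lambda>m. (\<sigma> ^^ m) r))"
    by (rule finite_subset) simp
  then obtain a b where "a < b" and "(\<sigma> ^^ a) r = (\<sigma> ^^ b) r"
    by (rule finite_range_imp_repeat)
  then have "\<mu> ^ a * c r = \<mu> ^ b * c r"
    using iter by metis
  then have "\<mu> ^ a = \<mu> ^ b"
    using assms(4) by simp
  then have "\<mu> ^ (b - a) = 1"
    using \<open>a < b\<close> assms(5) power_diff_eq_1_if_power_eq by blast
  then show ?thesis
    using \<open>a < b\<close> by (intro exI[of _ "b - a"]) simp
qed

lemma eigen_component_coeff_abs:
  assumes rel: "\<forall>r<L. pcompose (P (p * r mod L)) [:0, real p:] = smult lp (P r)"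
    and "p \<ge> 2" and "lp \<noteq> 0" and "r < L" and "coeff (P r) j \<noteq> 0"
  shows "\<bar>lp\<bar> = real p ^ j"
proof -
  define \<mu> where "\<mu> = lp / real p ^ j"
  have "coeff (P (p * s mod L)) j = \<mu> * coeff (P s) j" if "s < L" for s
  proof -
    have "real p ^ j * coeff (P (p * s mod L)) j = lp * coeff (P s) j"
      using arg_cong[OF rel[rule_format, OF that], of "\<lambda>Q. coeff Q j"]
      by (simp add: coeff_pcompose_linear)
    then show ?thesis
      using \<open>p \<ge> 2\<close> by (simp add: \<mu>_def field_simps)
  qed
  moreover have "\<mu> \<noteq> 0"
    using assms(3) \<open>p \<ge> 2\<close> by (simp add: \<mu>_def)
  ultimately obtain k where "k > 0" and "\<mu> ^ k = 1"
    using scaled_orbit_root_of_unity[of L "\<lambda>s. p * s mod L" "\<lambda>s. coeff (P s) j" \<mu> r] assms(4,5)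
    by auto
  then have "\<bar>\<mu>\<bar> ^ k = 1 ^ k"
    by (simp add: power_abs[symmetric])
  then have "\<bar>\<mu>\<bar> = 1"
    using \<open>k > 0\<close> by (subst (asm) power_eq_iff_eq_base) auto
  then have "\<bar>lp\<bar> / real p ^ j = 1"
    using assms(3) by (simp add: \<mu>_def)
  then show ?thesis
    using \<open>p \<ge> 2\<close> by simp
qed

lemma eigen_coeffs_monomial:
  fixes f :: "real fps"
  assumes quasi: "\<forall>n. f $ n = poly (P (n mod L)) (real n)" and "L > 0"
    and "p \<ge> 2" and "lp \<noteq> 0" and eigen: "U p f = fps_const lp * f"
  shows "\<exists>c d. \<forall>n. f $ n = c (n mod L) * real n ^ d"
proof -
  have "\<forall>r<L. pcompose (P (p * r mod L)) [:0, real p:] = smult lp (P r)"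
    using quasi_polynomial_eigen_components[OF quasi eigen] by blast
  then have abs: "\<bar>lp\<bar> = real p ^ j" if "r < L" and "coeff (P r) j \<noteq> 0" for r j
    using eigen_component_coeff_abs \<open>p \<ge> 2\<close> \<open>lp \<noteq> 0\<close> that by blast
  obtain d where d: "\<And>r j. r < L \<Longrightarrow> coeff (P r) j \<noteq> 0 \<Longrightarrow> j = d"
  proof (cases "\<exists>r<L. \<exists>j. coeff (P r) j \<noteq> 0")
    case True
    then obtain r0 j0 where "r0 < L" and "coeff (P r0) j0 \<noteq> 0"
      by blast
    then have "j = j0" if "r < L" and "coeff (P r) j \<noteq> 0" for r j
      using abs[OF that] abs[of r0 j0] \<open>p \<ge> 2\<close> by simp
    then show ?thesis
      using that by blast
  qed (use that in blast)
  have "P r = monom (coeff (P r) d) d" if "r < L" for r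
    using d[OF that] by (intro poly_eqI) auto
  then have fn: "f $ n = coeff (P (n mod L)) d * real n ^ d" for n
    using quasi \<open>L > 0\<close> by (metis mod_less_divisor poly_monom)
  show ?thesis
    by (intro exI[of _ "\<lambda>r. coeff (P r) d"] exI[of _ d] allI) (simp add: fn)
qed

lemma eigenfunction_congruent:
  fixes f :: "real fps"
  assumes f: "\<forall>n. f $ n = c (n mod L) * real n ^ d" and eigen: "U p f = fps_const lp * f"
    and "p > 0" and "[q = p] (mod L)"
  shows "U q f = fps_const ((real q / real p) ^ d * lp) * f"
proof (rule fps_ext)
  fix n
  have "q * n mod L = p * n mod L"
    using \<open>[q = p] (mod L)\<close> by (metis cong_def cong_scalar_right)
  then have "U q f $ n = (real q / real p) ^ d * (c (p * n mod L) * (real p * real n) ^ d)"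
    using \<open>p > 0\<close> by (simp add: U_def f power_mult_distrib power_divide)
  also have "c (p * n mod L) * (real p * real n) ^ d = lp * f $ n"
    using f eigen_coeff_mult[OF eigen, of n] by simp
  finally show "U q f $ n = (fps_const ((real q / real p) ^ d * lp) * f) $ n"
    by simp
qed

lemma eigenfunction_if_cong:
  fixes f :: "real fps"
  assumes f: "\<forall>n. f $ n = c (n mod L) * real n ^ d" and eigen: "U p f = fps_const lp * f"
    and "p > 0" and "[q = p] (mod L) \<or> [q = 1] (mod L)"
  shows "eigenfunction q f"
  using assms(4)
proof
  assume "[q = p] (mod L)"
  then show ?thesis
    using eigenfunction_congruent[OF f eigen \<open>p > 0\<close>] unfolding eigenfunction_def by blast
next
  assume q: "[q = 1] (mod L)"
  have U1: "U 1 f = fps_const 1 * f"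
    by (rule fps_ext) (simp add: U_def)
  have "U q f = fps_const ((real q / real 1) ^ d * 1) * f"
    using eigenfunction_congruent[OF f U1 _ q] by simp
  then show ?thesis
    unfolding eigenfunction_def by blast
qed

lemma eigen_coeffs_monomial_mod_level:
  assumes "p \<ge> 2" and rep: "rep A B f" and cop: "coprime A B"
    and eigen: "U p f = fps_const lp * f" and "lp \<noteq> 0"
  shows "level f > 0" and "\<exists>c d. \<forall>n. f $ n = c (n mod level f) * real n ^ d"
proof -
  have poles: "poles f = {z. poly (map_poly of_real B) z = 0}"
    using poles_eq_roots_coprime_denominator[OF rep cop] .
  have unity: "\<forall>z\<in>poles f. root_of_unity z"
    using poles_roots_of_unity[OF assms] .
  have "finite (poles f)"
    using rep unfolding poles by (intro poly_roots_finite) (auto simp: rep_iff_mult)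
  then show "level f > 0"
    using unity by (rule level_pos)
  moreover have "\<forall>z. poly (map_poly of_real B) z = 0 \<longrightarrow> z ^ level f = (1::complex)"
    using unity pole_power_level by (auto simp: poles)
  ultimately obtain P where "\<forall>n. f $ n = poly (P (n mod level f)) (real n)"
    using rep_coeffs_quasi_polynomial[OF rep] by blast
  then show "\<exists>c d. \<forall>n. f $ n = c (n mod level f) * real n ^ d"
    using eigen_coeffs_monomial \<open>level f > 0\<close> assms(1,4,5) by blast
qed

section \<open>Primes congruent to 1 modulo L\<close>

lemma cis_power_eq_1_imp:
  assumes "n > 0" and "k < n" and "cis (2 * pi / real n) ^ k = 1"
  shows "k = 0"
proof -
  have "cis (2 * pi * real k / real n) = cis (2 * pi * real 0 / real n)"
    using assms(3) by (simp add: DeMoivre algebra_simps)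
  then show ?thesis
    using bij_betw_roots_unity[OF assms(1)] assms(2) by (auto simp: bij_betw_def inj_on_def)
qed

definition imprimitive_unity_factor :: "nat \<Rightarrow> int poly" where
  "imprimitive_unity_factor L = gcd (monom 1 L - 1) (\<Prod>l | prime l \<and> l dvd L. monom 1 (L div l) - 1)"

(* A stand-in for the cyclotomic polynomial: X^L - 1 with its common factors with the
   X^(L/l) - 1, l a prime divisor of L, removed. *)
definition primitive_unity_factor :: "nat \<Rightarrow> int poly" where
  "primitive_unity_factor L = (monom 1 L - 1) div imprimitive_unity_factor L"

lemma unity_factors_mult: "primitive_unity_factor L * imprimitive_unity_factor L = monom 1 L - 1"
  by (simp add: primitive_unity_factor_def imprimitive_unity_factor_def)

lemma unity_poly_dvd_imprimitive_unity_factor: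
  assumes "L > 0" and "prime l" and "l dvd L"
  shows "monom 1 (L div l) - 1 dvd imprimitive_unity_factor L"
proof -
  have "monom (1::int) L - 1 = monom 1 (L div l) ^ l - 1"
    using assms(3) by (simp add: monom_power)
  also have "\<dots> = (monom 1 (L div l) - 1) * (\<Sum>i<l. monom 1 (L div l) ^ i)"
    by (rule power_diff_1_eq)
  finally have "monom 1 (L div l) - 1 dvd monom (1::int) L - 1"
    by simp
  moreover have "monom 1 (L div l) - 1 dvd (\<Prod>l | prime l \<and> l dvd L. monom (1::int) (L div l) - 1)"
    using assms by (intro dvd_prodI finite_prime_divisors) auto
  ultimately show ?thesis
    unfolding imprimitive_unity_factor_def by (rule gcd_greatest)
qed

lemma poly_imprimitive_unity_factor_nonzero:
  assumes "L > 0"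
  shows "poly (map_poly of_int (imprimitive_unity_factor L)) (cis (2 * pi / real L)) \<noteq> 0"
proof -
  define \<zeta> where "\<zeta> = cis (2 * pi / real L)"
  define ev where "ev P = poly (map_poly (of_int :: int \<Rightarrow> complex) P) \<zeta>" for P
  have ev_prod: "ev (\<Prod>l\<in>A. G l) = (\<Prod>l\<in>A. ev (G l))" for A and G :: "nat \<Rightarrow> int poly"
    by (simp add: ev_def of_int_poly_hom.hom_prod poly_prod)
  have "ev (monom 1 (L div l) - 1) \<noteq> 0" if "prime l" and "l dvd L" for l
  proof
    assume "ev (monom 1 (L div l) - 1) = 0"
    then have "\<zeta> ^ (L div l) = 1"
      by (simp add: ev_def of_int_poly_hom.hom_minus map_poly_monom poly_monom)
    moreover have "L div l < L"
      using that assms prime_gt_1_nat[of l] by (intro div_less_dividend) auto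
    moreover have "L div l > 0"
      using that assms by (simp add: div_greater_zero_iff dvd_imp_le prime_gt_0_nat)
    ultimately show False
      using cis_power_eq_1_imp[OF assms, of "L div l"] by (simp add: \<zeta>_def)
  qed
  then have "ev (\<Prod>l | prime l \<and> l dvd L. monom 1 (L div l) - 1) \<noteq> 0"
    using finite_prime_divisors[of L] assms by (simp add: ev_prod)
  moreover have "imprimitive_unity_factor L dvd (\<Prod>l | prime l \<and> l dvd L. monom 1 (L div l) - 1)"
    unfolding imprimitive_unity_factor_def by (rule gcd_dvd2)
  ultimately show ?thesis
    by (auto simp: ev_def \<zeta>_def of_int_poly_hom.hom_mult)
qed

lemma degree_primitive_unity_factor_pos:
  assumes "L > 0"
  shows "degree (primitive_unity_factor L) > 0"
proof (rule ccontr)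
  define \<zeta> where "\<zeta> = cis (2 * pi / real L)"
  define H where "H = primitive_unity_factor L"
  have "map_poly of_int (monom 1 L - 1)
      = map_poly of_int H * map_poly (of_int :: int \<Rightarrow> complex) (imprimitive_unity_factor L)"
    by (simp add: H_def unity_factors_mult[symmetric] of_int_poly_hom.hom_mult)
  moreover have "poly (map_poly of_int (monom 1 L - 1)) \<zeta> = (0::complex)"
    by (simp add: \<zeta>_def of_int_poly_hom.hom_minus map_poly_monom poly_monom DeMoivre)
  ultimately have "poly (map_poly of_int H) \<zeta> = (0::complex)"
    using poly_imprimitive_unity_factor_nonzero[OF assms] by (simp add: \<zeta>_def)
  moreover assume "\<not> degree (primitive_unity_factor L) > 0"
  then obtain c where "H = [:c:]"
    by (metis H_def degree_eq_zeroE neq0_conv)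
  moreover have "H \<noteq> 0"
  proof
    assume "H = 0"
    then have "poly (monom 1 L - 1 :: int poly) 0 = 0"
      using unity_factors_mult[of L] by (metis H_def mult_zero_left poly_0)
    then show False
      using assms by (simp add: poly_monom power_0_left)
  qed
  ultimately show False
    by simp
qed

lemma cong_power_if_dvd_primitive_unity_factor:
  fixes q a :: nat
  assumes "int q dvd poly (primitive_unity_factor L) (int a)"
  shows "[a ^ L = 1] (mod q)"
proof -
  have "int q dvd poly (monom 1 L - 1) (int a)"
    using assms by (simp add: unity_factors_mult[symmetric])
  then show ?thesis
    by (simp add: poly_monom cong_iff_dvd_diff flip: cong_int_iff)
qed

lemma ord_eq_if_dvd_primitive_unity_factor:
  fixes q a :: nat
  assumes "prime q" and q: "int q dvd poly (primitive_unity_factor L) (int a)"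
    and "L > 0" and "\<not> q dvd L" and "\<not> q dvd a"
  shows "ord q a = L"
proof (rule ccontr)
  define H where "H = primitive_unity_factor L"
  define K where "K = imprimitive_unity_factor L"
  assume "ord q a \<noteq> L"
  moreover obtain t where t: "L = ord q a * t"
    using cong_power_if_dvd_primitive_unity_factor[OF q] ord_divides by blast
  ultimately obtain l where "prime l" and "l dvd t"
    by (metis mult.right_neutral prime_factor_nat)
  from \<open>l dvd t\<close> obtain s where "t = l * s"
    by (elim dvdE)
  then have "L = l * (ord q a * s)"
    using t by (simp add: ac_simps)
  then have "l dvd L" and "ord q a dvd L div l"
    using \<open>prime l\<close> by (simp_all add: prime_gt_0_nat)
  then have "int q dvd poly (monom 1 (L div l) - 1) (int a)"
    using ord_divides by (simp add: poly_monom cong_iff_dvd_diff flip: cong_int_iff)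
  moreover obtain W where "K = (monom 1 (L div l) - 1) * W"
    using unity_poly_dvd_imprimitive_unity_factor[OF \<open>L > 0\<close> \<open>prime l\<close> \<open>l dvd L\<close>]
    unfolding K_def by (elim dvdE)
  ultimately have "int q dvd poly K (int a)"
    by simp
  moreover have "int q dvd poly H (int a)"
    using q by (simp add: H_def)
  \<comment> \<open>so a is a double root of X^L - 1 modulo q\<close>
  ultimately have "int q dvd poly (pderiv (H * K)) (int a)"
    by (simp add: pderiv_mult)
  then have "int q dvd int L * int a ^ (L - 1)"
    by (simp add: H_def K_def unity_factors_mult pderiv_diff pderiv_monom poly_monom)
  then have "q dvd L * a ^ (L - 1)"
    by (metis of_nat_dvd_iff of_nat_mult of_nat_power)
  then show False
    using assms(1,4,5) by (auto simp: prime_dvd_mult_iff dest: prime_dvd_power)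
qed

lemma prime_dvd_primitive_unity_factor:
  fixes q a :: nat
  assumes "prime q" and q: "int q dvd poly (primitive_unity_factor L) (int a)"
    and "L > 0" and "L dvd a"
  shows "\<not> q dvd a" and "[q = 1] (mod L)"
proof -
  have aL: "[a ^ L = 1] (mod q)"
    using q by (rule cong_power_if_dvd_primitive_unity_factor)
  show "\<not> q dvd a"
  proof
    assume "q dvd a"
    then have "q dvd a ^ L"
      using \<open>L > 0\<close> by (meson dvd_power dvd_trans)
    then have "[a ^ L = 0] (mod q)"
      by (simp add: cong_0_iff)
    then have "[1 = 0] (mod q)"
      using aL by (metis cong_sym cong_trans)
    then show False
      using \<open>prime q\<close> by (simp add: cong_0_iff)
  qed
  then have "\<not> q dvd L" and "coprime q a"
    using \<open>L dvd a\<close> \<open>prime q\<close> by (auto intro: dvd_trans prime_imp_coprime)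
  then have "L dvd q - 1"
    using ord_eq_if_dvd_primitive_unity_factor[OF \<open>prime q\<close> q \<open>L > 0\<close>] \<open>\<not> q dvd a\<close>
      order_divides_totient[OF \<open>coprime q a\<close>] totient_prime[OF \<open>prime q\<close>] by simp
  moreover have "q \<ge> 1"
    using \<open>prime q\<close> by (rule prime_ge_1_nat)
  ultimately show "[q = 1] (mod L)"
    by (simp add: cong_altdef_nat)
qed

lemma nonconstant_int_poly_value_not_unit:
  fixes H :: "int poly"
  assumes "degree H > 0" and "infinite S"
  shows "\<exists>x\<in>S. \<bar>poly H x\<bar> \<noteq> 1"
proof -
  have "H ^ 2 - 1 \<noteq> 0"
  proof
    assume "H ^ 2 - 1 = 0"
    then have "degree (H ^ 2) = 0"
      by simp
    moreover have "H \<noteq> 0"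
      using assms(1) by auto
    ultimately show False
      using assms(1) by (simp add: degree_power_eq)
  qed
  then have "finite {x. poly (H ^ 2 - 1) x = 0}"
    by (rule poly_roots_finite)
  then have "\<not> S \<subseteq> {x. poly (H ^ 2 - 1) x = 0}"
    using assms(2) finite_subset by blast
  then obtain x where "x \<in> S" and "poly (H ^ 2 - 1) x \<noteq> 0"
    by blast
  then have "poly H x ^ 2 \<noteq> 1"
    by simp
  then have "\<bar>poly H x\<bar> \<noteq> 1"
    by (metis power2_abs power_one)
  then show ?thesis
    using \<open>x \<in> S\<close> by blast
qed

lemma infinite_primes_cong_1:
  assumes "L > 0"
  shows "infinite {q::nat. prime q \<and> [q = 1] (mod L)}"
  unfolding infinite_nat_iff_unbounded
proof
  fix B :: nat
  define a where "a t = L * fact B * Suc t" for t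
  have "infinite (range (\<lambda>t. int (a t)))"
    using assms by (intro range_inj_infinite) (simp add: inj_def a_def)
  then obtain t where "\<bar>poly (primitive_unity_factor L) (int (a t))\<bar> \<noteq> 1"
    using nonconstant_int_poly_value_not_unit degree_primitive_unity_factor_pos[OF assms] by blast
  then have "nat \<bar>poly (primitive_unity_factor L) (int (a t))\<bar> \<noteq> 1"
    by (simp add: nat_eq_iff)
  then obtain q where "prime q" and "q dvd nat \<bar>poly (primitive_unity_factor L) (int (a t))\<bar>"
    using prime_factor_nat by blast
  then have "int q dvd poly (primitive_unity_factor L) (int (a t))"
    by simp
  moreover have "L dvd a t"
    by (simp add: a_def)
  ultimately have "\<not> q dvd a t" and "[q = 1] (mod L)"
    using prime_dvd_primitive_unity_factor[OF \<open>prime q\<close> _ assms] by blast+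
  moreover have "q > B"
  proof (rule ccontr)
    assume "\<not> q > B"
    then have "q dvd fact B"
      using prime_ge_1_nat[OF \<open>prime q\<close>] by (intro dvd_fact) auto
    then show False
      using \<open>\<not> q dvd a t\<close> by (simp add: a_def)
  qed
  ultimately show "\<exists>q>B. q \<in> {q. prime q \<and> [q = 1] (mod L)}"
    using \<open>prime q\<close> by blast
qed

theorem mainTheorem7:
  fixes p :: nat and f :: "real fps" and lp :: real
  assumes "p \<ge> 2" and "inR f" and "f \<noteq> 0"
    and "lp \<noteq> 0" and "U p f = fps_const lp * f"
  shows "(\<forall>z\<in>poles f. root_of_unity z)
    \<and> (\<forall>m::nat. m > 0 \<longrightarrow> eigenfunction (p + m * level f) f)
    \<and> infinite {q::nat. prime q \<and> eigenfunction q f}"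
proof -
  obtain A B where rep: "rep A B f" and cop: "coprime A B"
    using assms(2,3) rep_coprime_exists unfolding inR_def by blast
  obtain c d where f: "\<forall>n. f $ n = c (n mod level f) * real n ^ d"
    using eigen_coeffs_monomial_mod_level(2)[OF assms(1) rep cop assms(5,4)] by blast
  have eigen: "eigenfunction q f" if "[q = p] (mod level f) \<or> [q = 1] (mod level f)" for q
    using eigenfunction_if_cong[OF f assms(5) _ that] assms(1) by simp
  have "{q. prime q \<and> [q = 1] (mod level f)} \<subseteq> {q. prime q \<and> eigenfunction q f}"
    using eigen by blast
  then have "infinite {q. prime q \<and> eigenfunction q f}"
    using infinite_primes_cong_1 eigen_coeffs_monomial_mod_level(1)[OF assms(1) rep cop assms(5,4)]
      infinite_super by blast
  moreover have "eigenfunction (p + m * level f) f" for m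
    using eigen by (simp add: cong_def)
  ultimately show ?thesis
    using poles_roots_of_unity[OF assms(1) rep cop assms(5,4)] by blast
qed

end
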